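(* Let $\alpha>0$, $\gamma>0$, $\beta_2\in\mathbb{R}\setminus\{0\}$ and $\kappa,\chi\in\mathbb{R}\setminus\{0\}$, and set $K=-\frac{2\gamma\kappa}{\chi\beta_2}$, assumed to satisfy $K>0$. Define $$T(z,t)=Ke^{-\alpha z}t,\qquad Z(z)=\frac{K\gamma}{2\alpha\chi}\left(e^{-2\alpha z}-1\right).$$ Let $Q(Z,T)$ be a solution of the standard NLSE $$iQ_Z+\kappa Q_{TT}+\chi|Q|^2Q=0 .$$ Then $$v(z,t)=\sqrt{K}\exp\Big[i\frac{\alpha}{2\beta_2}t^2-\frac{\alpha}{2}z\Big]\,Q(Z(z),T(z,t))$$ is a solution of $$iv_z+\frac{\beta_2}{2}v_{tt}-\gamma e^{-\alpha z}|v|^2v+\frac{\alpha^2}{2\beta_2}t^2v=0 .$$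
   Context: All functions are complex-valued functions of real variables; solutions are understood classically (sufficiently differentiable). *)

theory Defs
  imports "HOL-Analysis.Analysis"
begin

end

theory Submission
  imports Defs
begin

text \<open>Write \<open>v = sqrt K * E * Q (Z z) (a z * t)\<close> with the chirp \<open>E = exp (i c t^2 - \<alpha> z / 2)\<close>,
\<open>c = \<alpha> / (2 \<beta>2)\<close>, and the time scale \<open>a z = K exp (- \<alpha> z)\<close>. After the chain rule, the chirp terms
cancel in pairs against the rest of the equation: \<open>(2 i c t)^2\<close> against the potential \<open>\<alpha>^2 t^2 / (2 \<beta>2)\<close>,
\<open>i c\<close> against the damping \<open>\<alpha> / 2\<close>, and the cross term \<open>2 i c t a Q_T\<close> against the drift \<open>a' t Q_T\<close>,
since \<open>a' = - \<alpha> a\<close>. What remains is \<open>-(\<gamma> / \<chi>) K exp (-2 \<alpha> z)\<close> times the NLSE for \<open>Q\<close>, because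
\<open>Z' = -(K \<gamma> / \<chi>) exp (-2 \<alpha> z)\<close>, \<open>|v|^2 = K exp (- \<alpha> z) |Q|^2\<close> and, by the choice of \<open>K\<close>,
\<open>\<beta>2 K / 2 = -(\<gamma> / \<chi>) \<kappa>\<close>.\<close>

definition chirp :: "real \<Rightarrow> real \<Rightarrow> real \<Rightarrow> real \<Rightarrow> complex" where
  "chirp c \<mu> z t = exp (\<i> * complex_of_real (c * t\<^sup>2) - complex_of_real (\<mu> * z))"

lemma chirp_has_vector_derivative_z:
  "((\<lambda>z. chirp c \<mu> z t) has_vector_derivative chirp c \<mu> z t * complex_of_real (- \<mu>)) (at z)"
proof -
  have "((\<lambda>z. \<i> * complex_of_real (c * t\<^sup>2) - complex_of_real (\<mu> * z)) has_vector_derivative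
      complex_of_real (- \<mu>)) (at z)"
    by (auto intro!: derivative_eq_intros)
  from field_vector_diff_chain_at[OF this DERIV_exp] show ?thesis
    by (simp add: chirp_def o_def mult.commute)
qed

lemma chirp_has_vector_derivative_t:
  "((\<lambda>t. chirp c \<mu> z t) has_vector_derivative chirp c \<mu> z t * (\<i> * complex_of_real (2 * c * t))) (at t)"
proof -
  have "((\<lambda>t. complex_of_real (c * t\<^sup>2)) has_vector_derivative complex_of_real (2 * c * t)) (at t)"
    by (rule has_vector_derivative_of_real) (auto intro!: derivative_eq_intros)
  then have "((\<lambda>t. \<i> * complex_of_real (c * t\<^sup>2) - complex_of_real (\<mu> * z)) has_vector_derivative
      \<i> * complex_of_real (2 * c * t)) (at t)"
    by (simp only: has_vector_derivative_diff_const has_vector_derivative_mult_right)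
  from field_vector_diff_chain_at[OF this DERIV_exp] show ?thesis
    by (simp add: chirp_def o_def mult.commute)
qed

lemma norm_chirp: "cmod (chirp c \<mu> z t) = exp (- \<mu> * z)"
  by (simp add: chirp_def norm_exp_eq_Re)

lemma has_vector_derivative_along_path:
  fixes F :: "real \<times> real \<Rightarrow> 'a::real_normed_vector"
  assumes "(F has_derivative (\<lambda>h. fst h *\<^sub>R Fx + snd h *\<^sub>R Fy)) (at (g x))"
    and "(g has_vector_derivative (a, b)) (at x)"
  shows "((\<lambda>s. F (g s)) has_vector_derivative a *\<^sub>R Fx + b *\<^sub>R Fy) (at x)"
proof -
  have "(F \<circ> g has_derivative (\<lambda>h. fst h *\<^sub>R Fx + snd h *\<^sub>R Fy) \<circ> (\<lambda>h. h *\<^sub>R (a, b))) (at x)"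
    using diff_chain_at assms unfolding has_vector_derivative_def by blast
  then show ?thesis
    by (simp add: has_vector_derivative_def o_def scaleR_add_right)
qed

lemma chirp_lens_has_vector_derivative_z:
  fixes Q QZ QT :: "real \<Rightarrow> real \<Rightarrow> complex" and Z a :: "real \<Rightarrow> real"
  assumes "(Z has_real_derivative Z') (at z)" and "(a has_real_derivative a') (at z)"
    and "((\<lambda>p. Q (fst p) (snd p)) has_derivative
      (\<lambda>h. fst h *\<^sub>R QZ (Z z) (a z * t) + snd h *\<^sub>R QT (Z z) (a z * t))) (at (Z z, a z * t))"
  shows "((\<lambda>z. chirp c \<mu> z t * Q (Z z) (a z * t)) has_vector_derivative
      chirp c \<mu> z t * (complex_of_real (- \<mu>) * Q (Z z) (a z * t) + complex_of_real Z' * QZ (Z z) (a z * t)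
        + complex_of_real (a' * t) * QT (Z z) (a z * t))) (at z)"
proof -
  have "((\<lambda>z. (Z z, a z * t)) has_vector_derivative (Z', a' * t)) (at z)"
    using assms(1,2) by (auto simp: has_real_derivative_iff_has_vector_derivative has_vector_derivative_def
        intro!: has_derivative_Pair derivative_eq_intros)
  from has_vector_derivative_along_path[OF _ this, of "\<lambda>p. Q (fst p) (snd p)"] assms(3)
  have "((\<lambda>z. Q (Z z) (a z * t)) has_vector_derivative
      Z' *\<^sub>R QZ (Z z) (a z * t) + (a' * t) *\<^sub>R QT (Z z) (a z * t)) (at z)"
    by simp
  from has_vector_derivative_mult[OF chirp_has_vector_derivative_z this] show ?thesis
    by (simp add: scaleR_conv_of_real algebra_simps)
qed

lemma chirp_lens_has_vector_derivative_t:
  fixes Q QZ QT :: "real \<Rightarrow> real \<Rightarrow> complex"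
  assumes "((\<lambda>p. Q (fst p) (snd p)) has_derivative
      (\<lambda>h. fst h *\<^sub>R QZ Z0 (a * t) + snd h *\<^sub>R QT Z0 (a * t))) (at (Z0, a * t))"
  shows "((\<lambda>t. chirp c \<mu> z t * Q Z0 (a * t)) has_vector_derivative
      chirp c \<mu> z t * (\<i> * complex_of_real (2 * c * t) * Q Z0 (a * t) + complex_of_real a * QT Z0 (a * t))) (at t)"
proof -
  have "((\<lambda>t. (Z0, a * t)) has_vector_derivative (0, a)) (at t)"
    by (auto simp: has_vector_derivative_def intro!: has_derivative_Pair derivative_eq_intros)
  from has_vector_derivative_along_path[OF _ this, of "\<lambda>p. Q (fst p) (snd p)"] assms
  have "((\<lambda>t. Q Z0 (a * t)) has_vector_derivative a *\<^sub>R QT Z0 (a * t)) (at t)"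
    by simp
  from has_vector_derivative_mult[OF chirp_has_vector_derivative_t this] show ?thesis
    by (simp add: scaleR_conv_of_real algebra_simps)
qed

lemma chirp_lens_has_second_derivative_t:
  fixes Q QZ QT QTT :: "real \<Rightarrow> real \<Rightarrow> complex"
  assumes "((\<lambda>p. Q (fst p) (snd p)) has_derivative
      (\<lambda>h. fst h *\<^sub>R QZ Z0 (a * t) + snd h *\<^sub>R QT Z0 (a * t))) (at (Z0, a * t))"
    and "((\<lambda>s. QT Z0 s) has_vector_derivative QTT Z0 (a * t)) (at (a * t))"
  shows "((\<lambda>t. chirp c \<mu> z t * (\<i> * complex_of_real (2 * c * t) * Q Z0 (a * t) + complex_of_real a * QT Z0 (a * t)))
      has_vector_derivative chirp c \<mu> z t * ((\<i> * complex_of_real (2 * c * t))\<^sup>2 * Q Z0 (a * t)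
        + \<i> * complex_of_real (2 * c) * Q Z0 (a * t)
        + 2 * \<i> * complex_of_real (2 * c * t * a) * QT Z0 (a * t)
        + complex_of_real (a\<^sup>2) * QTT Z0 (a * t))) (at t)"
proof -
  have lens: "((\<lambda>t. chirp c \<mu> z t * Q Z0 (a * t)) has_vector_derivative
      chirp c \<mu> z t * (\<i> * complex_of_real (2 * c * t) * Q Z0 (a * t) + complex_of_real a * QT Z0 (a * t))) (at t)"
    using assms(1) by (rule chirp_lens_has_vector_derivative_t)
  have frequency: "((\<lambda>t. \<i> * complex_of_real (2 * c * t)) has_vector_derivative \<i> * complex_of_real (2 * c)) (at t)"
    by (intro has_vector_derivative_mult_right has_vector_derivative_of_real) (auto intro!: derivative_eq_intros)
  have "((\<lambda>t. a * t) has_vector_derivative a) (at t)"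
    by (auto simp: has_real_derivative_iff_has_vector_derivative[symmetric] intro!: derivative_eq_intros)
  from vector_diff_chain_at[OF this assms(2)]
  have QT_lens: "((\<lambda>t. complex_of_real a * QT Z0 (a * t)) has_vector_derivative
      complex_of_real a * (a *\<^sub>R QTT Z0 (a * t))) (at t)"
    by (intro has_vector_derivative_mult_right) (simp add: o_def)
  have expanded: "((\<lambda>t. chirp c \<mu> z t * Q Z0 (a * t) * (\<i> * complex_of_real (2 * c * t))
      + chirp c \<mu> z t * (complex_of_real a * QT Z0 (a * t))) has_vector_derivative
      chirp c \<mu> z t * Q Z0 (a * t) * (\<i> * complex_of_real (2 * c))
      + chirp c \<mu> z t * (\<i> * complex_of_real (2 * c * t) * Q Z0 (a * t) + complex_of_real a * QT Z0 (a * t))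
        * (\<i> * complex_of_real (2 * c * t))
      + (chirp c \<mu> z t * (complex_of_real a * (a *\<^sub>R QTT Z0 (a * t)))
        + chirp c \<mu> z t * (\<i> * complex_of_real (2 * c * t)) * (complex_of_real a * QT Z0 (a * t)))) (at t)"
    by (intro has_vector_derivative_add has_vector_derivative_mult chirp_has_vector_derivative_t
        lens frequency QT_lens)
  have factored: "(\<lambda>t. chirp c \<mu> z t * (\<i> * complex_of_real (2 * c * t) * Q Z0 (a * t) + complex_of_real a * QT Z0 (a * t)))
    = (\<lambda>t. chirp c \<mu> z t * Q Z0 (a * t) * (\<i> * complex_of_real (2 * c * t))
      + chirp c \<mu> z t * (complex_of_real a * QT Z0 (a * t)))"
    by (simp add: algebra_simps)
  show ?thesis
    unfolding factored
    by (rule has_vector_derivative_eq_rhs[OF expanded]) (simp add: algebra_simps power2_eq_square scaleR_conv_of_real)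
qed

lemma chirp_lens_NLSE_identity:
  fixes w q qz qt qtt :: complex and \<alpha> \<beta>2 \<gamma> \<kappa> chi K e t n :: real
  assumes "\<beta>2 \<noteq> 0" and "chi \<noteq> 0" and "\<gamma> \<noteq> 0" and "K = - (2 * \<gamma> * \<kappa>) / (chi * \<beta>2)"
  shows "\<i> * (w * (complex_of_real (- (\<alpha> / 2)) * q + complex_of_real (- (K * \<gamma> / chi) * e\<^sup>2) * qz
          + complex_of_real (- \<alpha> * (K * e) * t) * qt))
      + complex_of_real (\<beta>2 / 2) * (w * ((\<i> * complex_of_real (2 * (\<alpha> / (2 * \<beta>2)) * t))\<^sup>2 * q
          + \<i> * complex_of_real (2 * (\<alpha> / (2 * \<beta>2))) * q
          + 2 * \<i> * complex_of_real (2 * (\<alpha> / (2 * \<beta>2)) * t * (K * e)) * qt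
          + complex_of_real ((K * e)\<^sup>2) * qtt))
      - complex_of_real (\<gamma> * e * (K * e * n)) * (w * q) + complex_of_real (\<alpha>\<^sup>2 / (2 * \<beta>2) * t\<^sup>2) * (w * q)
    = w * complex_of_real (- (K * \<gamma> / chi) * e\<^sup>2)
        * (\<i> * qz + complex_of_real \<kappa> * qtt + complex_of_real (chi * n) * q)"
proof -
  have \<kappa>_eq: "\<kappa> = - \<beta>2 * K * chi / (2 * \<gamma>)"
    using assms by (simp add: field_simps)
  show ?thesis
    unfolding \<kappa>_eq using assms(1-3) by (simp add: field_simps power2_eq_square)
qed

theorem theorem3p3p1:
  fixes \<alpha> \<gamma> \<beta>2 \<kappa> chi K :: real
    and Q QZ QT QTT :: "real \<Rightarrow> real \<Rightarrow> complex"
    and Tf :: "real \<Rightarrow> real \<Rightarrow> real" and Zf :: "real \<Rightarrow> real"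
    and v :: "real \<Rightarrow> real \<Rightarrow> complex"
  assumes "\<alpha> > 0" and "\<gamma> > 0" and "\<beta>2 \<noteq> 0" and "\<kappa> \<noteq> 0" and "chi \<noteq> 0"
    and K_def: "K = - (2 * \<gamma> * \<kappa>) / (chi * \<beta>2)" and "K > 0"
    and T_def: "Tf = (\<lambda>z t. K * exp (- \<alpha> * z) * t)"
    and Z_def: "Zf = (\<lambda>z. K * \<gamma> / (2 * \<alpha> * chi) * (exp (- 2 * \<alpha> * z) - 1))"
    and Q_diff: "\<And>Z T. ((\<lambda>p. Q (fst p) (snd p)) has_derivative
                     (\<lambda>h. fst h *\<^sub>R QZ Z T + snd h *\<^sub>R QT Z T)) (at (Z, T))"
    and Q_TT: "\<And>Z T. ((\<lambda>s. QT Z s) has_vector_derivative QTT Z T) (at T)"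
    and Q_eq: "\<And>Z T. \<i> * QZ Z T + complex_of_real \<kappa> * QTT Z T
                     + complex_of_real (chi * (cmod (Q Z T))\<^sup>2) * Q Z T = 0"
    and v_def: "v = (\<lambda>z t. complex_of_real (sqrt K)
                     * exp (\<i> * complex_of_real (\<alpha> / (2 * \<beta>2) * t\<^sup>2) - complex_of_real (\<alpha> / 2 * z))
                     * Q (Zf z) (Tf z t))"
  shows "\<forall>z t.
           (\<lambda>s. v s t) differentiable (at z)
         \<and> (\<forall>s. (\<lambda>r. v z r) differentiable (at s))
         \<and> (\<lambda>s. vector_derivative (\<lambda>r. v z r) (at s)) differentiable (at t)
         \<and> \<i> * vector_derivative (\<lambda>s. v s t) (at z)
             + complex_of_real (\<beta>2 / 2)
                 * vector_derivative (\<lambda>s. vector_derivative (\<lambda>r. v z r) (at s)) (at t)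
             - complex_of_real (\<gamma> * exp (- \<alpha> * z) * (cmod (v z t))\<^sup>2) * v z t
             + complex_of_real (\<alpha>\<^sup>2 / (2 * \<beta>2) * t\<^sup>2) * v z t = 0"
proof (intro allI, goal_cases)
  case (1 z t)
  have \<gamma>_nonzero: "\<gamma> \<noteq> 0"
    using \<open>\<gamma> > 0\<close> by simp
  define a where "a = (\<lambda>z. K * exp (- \<alpha> * z))"
  define c where "c = \<alpha> / (2 * \<beta>2)"
  define w where "w = complex_of_real (sqrt K) * chirp c (\<alpha> / 2) z t"
  have v_chirp: "v = (\<lambda>z t. complex_of_real (sqrt K) * (chirp c (\<alpha> / 2) z t * Q (Zf z) (a z * t)))"
    by (simp add: v_def T_def chirp_def a_def c_def mult.assoc)
  have Zf_deriv: "(Zf has_real_derivative - (K * \<gamma> / chi) * (exp (- \<alpha> * z))\<^sup>2) (at z)"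
    unfolding Z_def using \<open>\<alpha> > 0\<close> \<open>chi \<noteq> 0\<close>
    by (auto intro!: derivative_eq_intros simp: power2_eq_square field_simps simp flip: exp_add)
  have a_deriv: "(a has_real_derivative - \<alpha> * a z) (at z)"
    unfolding a_def by (auto intro!: derivative_eq_intros)
  have v_z: "((\<lambda>s. v s t) has_vector_derivative w * (complex_of_real (- (\<alpha> / 2)) * Q (Zf z) (a z * t)
      + complex_of_real (- (K * \<gamma> / chi) * (exp (- \<alpha> * z))\<^sup>2) * QZ (Zf z) (a z * t)
      + complex_of_real (- \<alpha> * a z * t) * QT (Zf z) (a z * t))) (at z)"
    unfolding v_chirp w_def mult.assoc[of "complex_of_real (sqrt K)"]
    by (intro has_vector_derivative_mult_right chirp_lens_has_vector_derivative_z Zf_deriv a_deriv Q_diff)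
  have v_t: "((\<lambda>r. v z r) has_vector_derivative complex_of_real (sqrt K) * (chirp c (\<alpha> / 2) z s
      * (\<i> * complex_of_real (2 * c * s) * Q (Zf z) (a z * s) + complex_of_real (a z) * QT (Zf z) (a z * s)))) (at s)"
    for s
    unfolding v_chirp
    by (intro has_vector_derivative_mult_right chirp_lens_has_vector_derivative_t[where QZ = QZ] Q_diff)
  then have v_t_fun: "(\<lambda>s. vector_derivative (\<lambda>r. v z r) (at s)) = (\<lambda>s. complex_of_real (sqrt K) * (chirp c (\<alpha> / 2) z s
      * (\<i> * complex_of_real (2 * c * s) * Q (Zf z) (a z * s) + complex_of_real (a z) * QT (Zf z) (a z * s))))"
    by (intro ext vector_derivative_at)
  have v_tt: "((\<lambda>s. vector_derivative (\<lambda>r. v z r) (at s)) has_vector_derivative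
      w * ((\<i> * complex_of_real (2 * c * t))\<^sup>2 * Q (Zf z) (a z * t) + \<i> * complex_of_real (2 * c) * Q (Zf z) (a z * t)
        + 2 * \<i> * complex_of_real (2 * c * t * a z) * QT (Zf z) (a z * t)
        + complex_of_real ((a z)\<^sup>2) * QTT (Zf z) (a z * t))) (at t)"
    unfolding v_t_fun w_def mult.assoc[of "complex_of_real (sqrt K)"]
    by (intro has_vector_derivative_mult_right chirp_lens_has_second_derivative_t[where QZ = QZ] Q_diff Q_TT)
  have v_w: "v z t = w * Q (Zf z) (a z * t)"
    by (simp add: v_chirp w_def)
  have norm_v: "(cmod (v z t))\<^sup>2 = K * exp (- \<alpha> * z) * (cmod (Q (Zf z) (a z * t)))\<^sup>2"
    using \<open>K > 0\<close> by (simp add: v_chirp norm_mult norm_chirp power_mult_distrib flip: exp_of_nat_mult)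
  show ?case
  proof (intro conjI)
    show "(\<lambda>s. v s t) differentiable (at z)"
      using v_z differentiable_def has_vector_derivative_def by blast
    show "\<forall>s. (\<lambda>r. v z r) differentiable (at s)"
      using v_t differentiable_def has_vector_derivative_def by blast
    show "(\<lambda>s. vector_derivative (\<lambda>r. v z r) (at s)) differentiable (at t)"
      using v_tt differentiable_def has_vector_derivative_def by blast
    show "\<i> * vector_derivative (\<lambda>s. v s t) (at z)
        + complex_of_real (\<beta>2 / 2) * vector_derivative (\<lambda>s. vector_derivative (\<lambda>r. v z r) (at s)) (at t)
        - complex_of_real (\<gamma> * exp (- \<alpha> * z) * (cmod (v z t))\<^sup>2) * v z t
        + complex_of_real (\<alpha>\<^sup>2 / (2 * \<beta>2) * t\<^sup>2) * v z t = 0"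
      unfolding norm_v vector_derivative_at[OF v_z] vector_derivative_at[OF v_tt]
      unfolding v_w a_def c_def chirp_lens_NLSE_identity[OF \<open>\<beta>2 \<noteq> 0\<close> \<open>chi \<noteq> 0\<close> \<gamma>_nonzero K_def] Q_eq
      by simp
  qed
qed

end
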